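(* Let $G$ be a fully connected (complete) graph on $n$ vertices $\{1,\dots,n\}$, and let $t\mapsto\rho_t=(\rho_1(t),\dots,\rho_n(t))$ be a differentiable, $T$-periodic curve in $\mathcal P_o(G)=\{\rho\in\mathbb R^n:\sum_i\rho_i=1,\ \rho_i>0\ \forall i\}$. Then there exists a family of transition rate matrices $Q(t)$ (i.e. $n\times n$ matrices with nonnegative off-diagonal entries and each row summing to zero) such that $\rho_t$ solves the master equation $\dot\rho_t=\rho_tQ(t)$ (row vector times matrix) for all $t$. *)

theory Defs
  imports "HOL-Analysis.Analysis"
begin

definition prob_interior :: "(real ^ 'n) set" where
  "prob_interior = {\<rho>. (\<Sum>i\<in>UNIV. \<rho> $ i) = 1 \<and> (\<forall>i. \<rho> $ i > 0)}"

text \<open>Transition rate matrix: nonnegative off-diagonal entries, rows summing to zero.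
  Since G is the complete graph, every off-diagonal entry (edge) is allowed.\<close>
definition transition_rate_matrix :: "real ^ 'n ^ 'n \<Rightarrow> bool" where
  "transition_rate_matrix Q \<longleftrightarrow>
     (\<forall>i j. i \<noteq> j \<longrightarrow> Q $ i $ j \<ge> 0) \<and> (\<forall>i. (\<Sum>j\<in>UNIV. Q $ i $ j) = 0)"

end

theory Submission
  imports Defs
begin

text \<open>Given a point \<open>\<rho>\<close> of the open simplex and a velocity \<open>D\<close> with \<open>\<Sum>\<^sub>j D\<^sub>j = 0\<close>,
  take all rows of \<open>Q\<close> equal to \<open>\<alpha>\<^sub>j = D\<^sub>j + \<rho>\<^sub>j M\<close> and subtract \<open>M\<close> on the diagonal.
  Then \<open>(\<rho> Q)\<^sub>j = \<alpha>\<^sub>j - \<rho>\<^sub>j M = D\<^sub>j\<close> because \<open>\<Sum>\<^sub>i \<rho>\<^sub>i = 1\<close>, the rows sum to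
  \<open>\<Sum>\<^sub>j \<alpha>\<^sub>j - M = 0\<close>, and the choice \<open>M = \<Sum>\<^sub>j |D\<^sub>j| / \<rho>\<^sub>j\<close> makes every \<open>\<alpha>\<^sub>j\<close> nonnegative.
  Applying this at each time \<open>t\<close> with \<open>D = \<rho>'(t)\<close> proves the theorem.\<close>

definition rate_bound :: "real ^ 'n \<Rightarrow> real ^ 'n \<Rightarrow> real" where
  "rate_bound \<rho> D = (\<Sum>j\<in>UNIV. \<bar>D $ j\<bar> / \<rho> $ j)"

definition rate_matrix_for :: "real ^ 'n \<Rightarrow> real ^ 'n \<Rightarrow> real ^ 'n ^ 'n" where
  "rate_matrix_for \<rho> D =
     (\<chi> i j. D $ j + \<rho> $ j * rate_bound \<rho> D - (if i = j then rate_bound \<rho> D else 0))"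

lemma sum_vector_derivative_eq_0_if_sum_const:
  fixes \<rho> :: "real \<Rightarrow> real ^ 'n"
  assumes "\<And>t. (\<Sum>i\<in>UNIV. \<rho> t $ i) = c"
    and "(\<rho> has_vector_derivative D) (at t)"
  shows "(\<Sum>i\<in>UNIV. D $ i) = 0"
proof -
  have "((\<lambda>t. \<Sum>i\<in>UNIV. \<rho> t $ i) has_vector_derivative (\<Sum>i\<in>UNIV. D $ i)) (at t)"
    by (intro has_vector_derivative_sum bounded_linear.has_vector_derivative[OF
          bounded_linear_vec_nth assms(2)])
  moreover have "((\<lambda>t. \<Sum>i\<in>UNIV. \<rho> t $ i) has_vector_derivative 0) (at t)"
    using assms(1) by simp
  ultimately show ?thesis
    using vector_derivative_unique_at by blast
qed

lemma rate_matrix_for_offdiag_nonneg: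
  assumes "\<rho> \<in> prob_interior"
  shows "D $ j + \<rho> $ j * rate_bound \<rho> D \<ge> 0"
proof -
  have pos: "\<rho> $ k > 0" for k
    using assms by (simp add: prob_interior_def)
  have "\<bar>D $ j\<bar> / \<rho> $ j \<le> rate_bound \<rho> D"
    unfolding rate_bound_def by (rule member_le_sum) (auto intro: divide_nonneg_pos pos)
  then have "\<bar>D $ j\<bar> \<le> \<rho> $ j * rate_bound \<rho> D"
    using pos[of j] by (simp add: divide_le_eq mult.commute)
  then show ?thesis
    by linarith
qed

lemma transition_rate_matrix_rate_matrix_for:
  assumes "\<rho> \<in> prob_interior" and "(\<Sum>j\<in>UNIV. D $ j) = 0"
  shows "transition_rate_matrix (rate_matrix_for \<rho> D)"
proof -
  have "(\<Sum>j\<in>UNIV. \<rho> $ j) = 1"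
    using assms(1) by (simp add: prob_interior_def)
  then have "(\<Sum>j\<in>UNIV. D $ j + \<rho> $ j * rate_bound \<rho> D) = rate_bound \<rho> D"
    by (simp add: sum.distrib assms(2) sum_distrib_right[symmetric])
  then show ?thesis
    unfolding transition_rate_matrix_def rate_matrix_for_def
    by (auto simp: rate_matrix_for_offdiag_nonneg[OF assms(1)] sum_subtractf)
qed

lemma vector_matrix_mult_rate_matrix_for:
  assumes "(\<Sum>i\<in>UNIV. \<rho> $ i) = 1"
  shows "\<rho> v* rate_matrix_for \<rho> D = D"
proof -
  let ?M = "rate_bound \<rho> D"
  have "(\<rho> v* rate_matrix_for \<rho> D) $ j = D $ j" for j
  proof -
    have "(\<rho> v* rate_matrix_for \<rho> D) $ j
        = (\<Sum>i\<in>UNIV. \<rho> $ i * (D $ j + \<rho> $ j * ?M))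
          - (\<Sum>i\<in>UNIV. \<rho> $ i * (if i = j then ?M else 0))"
      by (simp add: vector_matrix_mult_def rate_matrix_for_def right_diff_distrib sum_subtractf)
    also have "\<dots> = (D $ j + \<rho> $ j * ?M) - \<rho> $ j * ?M"
      by (simp add: sum_distrib_right[symmetric] assms if_distrib cong: if_cong)
    finally show ?thesis
      by simp
  qed
  then show ?thesis
    by (simp add: vec_eq_iff)
qed

theorem mainTheorem4:
  fixes \<rho> :: "real \<Rightarrow> real ^ 'n" and T :: real
  assumes "T > 0"
    and "\<And>t. \<rho> (t + T) = \<rho> t"
    and "\<And>t. \<rho> differentiable (at t)"
    and "\<And>t. \<rho> t \<in> prob_interior"
  shows "\<exists>Q :: real \<Rightarrow> real ^ 'n ^ 'n.
           (\<forall>t. transition_rate_matrix (Q t)) \<and>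
           (\<forall>t. (\<rho> has_vector_derivative (\<rho> t v* Q t)) (at t))"
proof -
  define D where "D t = vector_derivative \<rho> (at t)" for t
  have deriv: "(\<rho> has_vector_derivative D t) (at t)" for t
    unfolding D_def using assms(3) vector_derivative_works by blast
  have sum_one: "(\<Sum>i\<in>UNIV. \<rho> t $ i) = 1" for t
    using assms(4) by (simp add: prob_interior_def)
  have "transition_rate_matrix (rate_matrix_for (\<rho> t) (D t))" for t
    using transition_rate_matrix_rate_matrix_for[OF assms(4)]
      sum_vector_derivative_eq_0_if_sum_const[OF sum_one deriv] .
  moreover have "(\<rho> has_vector_derivative (\<rho> t v* rate_matrix_for (\<rho> t) (D t))) (at t)" for t
    using deriv by (simp add: vector_matrix_mult_rate_matrix_for[OF sum_one])
  ultimately show ?thesis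
    by (intro exI[of _ "\<lambda>t. rate_matrix_for (\<rho> t) (D t)"]) blast
qed

end
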